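(* Assume the function-class realizability condition below. For any $h\in[H]$ and $N\ge N_{KD}$, there exists $\phi^{(B)}_h\in\Phi_N$ such that for any $x_1',x_2'\in\mathcal{X}_h$, if $\phi^{(B)}_h(x_1')=\phi^{(B)}_h(x_2')$ then $x_1'$ and $x_2'$ are backward kinematically inseparable.
   Context: Block MDP: horizon $H$; finite latent states $\mathcal{S}=\sqcup_h\mathcal{S}_h$; countable observations $\mathcal{X}=\sqcup_h\mathcal{X}_h$; finite actions $\mathcal{A}$; transitions $T(\cdot\mid s,a)\in\Delta(\mathcal{S}_{h+1})$ for $s\in\mathcal{S}_h$; emissions $q(\cdot\mid s)\in\Delta(\mathcal{X}_h)$ with pairwise disjoint supports, decoder $g^\star:\mathcal{X}\to\mathcal{S}$. Observation transitions $T(x'\mid x,a)=q(x'\mid g^\star(x'))T(g^\star(x')\mid g^\star(x),a)$. For full-support $u\in\Delta(\mathcal{X}\times\mathcal{A})$, $\mathbb{P}_u(x,a\mid x')=\frac{T(x'\mid x,a)u(x,a)}{\sum_{\tilde x,\tilde a}T(x'\mid\tilde x,\tilde a)u(\tilde x,\tilde a)}$; $x_1',x_2'$ are backward KI if $\mathbb{P}_u(\cdot\mid x_1')=\mathbb{P}_u(\cdot\mid x_2')$ for every such $u$; forward KI if $T(\cdot\mid x_1,a)=T(\cdot\mid x_2,a)$ for all $a$; KI if both; $N_{KD}$ is the maximum over $h$ of the number of KI equivalence classes within $\mathcal{X}_h$. $\Phi_N$ is a given finite class of maps $\mathcal{X}\to[N]$; $\mathcal{W}_N$ is all functions $[N]\times\mathcal{A}\times[N]\to[0,1]$;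 $\mathcal{F}_N=\{(x,a,x')\mapsto w(\phi^F(x),a,\phi^B(x')):w\in\mathcal{W}_N,\phi^F,\phi^B\in\Phi_N\}$. Realizability: for every $h$, $N\ge N_{KD}$ and every $\rho\in\Delta(\mathcal{S}_h)$ with full support there is $f_\rho\in\mathcal{F}_N$ with $f_\rho(x,a,x')=\frac{T(g^\star(x')\mid g^\star(x),a)}{T(g^\star(x')\mid g^\star(x),a)+\rho(g^\star(x'))}$ for all $x\in\mathcal{X}_{h-1},a\in\mathcal{A},x'\in\mathcal{X}_h$. *)

theory Defs
  imports "HOL-Analysis.Analysis"
begin

text \<open>States have type 's (finite), actions 'a (finite), observations 'x (countable).
  lS s is the layer h of the state s (so S_h = {s. lS s = h}); the layer of an observation x is
  lS (g x), where g is the decoder.  T s a s' is T(s'|s,a); q s x is q(x|s).\<close>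

definition block_mdp ::
  "nat \<Rightarrow> ('s::finite \<Rightarrow> nat) \<Rightarrow> ('s \<Rightarrow> 'a::finite \<Rightarrow> 's \<Rightarrow> real)
   \<Rightarrow> ('s \<Rightarrow> 'x::countable \<Rightarrow> real) \<Rightarrow> ('x \<Rightarrow> 's) \<Rightarrow> bool" where
  "block_mdp H lS T q g \<longleftrightarrow>
     H \<ge> 1 \<and>
     (\<forall>s. 1 \<le> lS s \<and> lS s \<le> H) \<and>
     (\<forall>s a s'. 0 \<le> T s a s') \<and>
     (\<forall>s a. lS s < H \<longrightarrow>
        (\<Sum>s'\<in>{s'. lS s' = lS s + 1}. T s a s') = 1 \<and>
        (\<forall>s'. 0 < T s a s' \<longrightarrow> lS s' = lS s + 1)) \<and>
     (\<forall>s a s'. lS s = H \<longrightarrow> T s a s' = 0) \<and>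
     (\<forall>s x. 0 \<le> q s x) \<and>
     (\<forall>s. (q s has_sum 1) UNIV) \<and>
     (\<forall>x s. 0 < q s x \<longrightarrow> g x = s) \<and>
     (\<forall>x. 0 < q (g x) x)"

definition obs_layer :: "('s \<Rightarrow> nat) \<Rightarrow> ('x \<Rightarrow> 's) \<Rightarrow> nat \<Rightarrow> 'x set" where
  "obs_layer lS g h = {x. lS (g x) = h}"

definition Tobs :: "('s \<Rightarrow> 'a \<Rightarrow> 's \<Rightarrow> real) \<Rightarrow> ('s \<Rightarrow> 'x \<Rightarrow> real) \<Rightarrow> ('x \<Rightarrow> 's)
    \<Rightarrow> 'x \<Rightarrow> 'a \<Rightarrow> 'x \<Rightarrow> real" where
  "Tobs T q g x a x' = q (g x') x' * T (g x) a (g x')"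

definition full_support_dist :: "('b \<Rightarrow> real) \<Rightarrow> bool" where
  "full_support_dist u \<longleftrightarrow> (\<forall>z. 0 < u z) \<and> (u has_sum 1) UNIV"

definition Pu :: "('s \<Rightarrow> 'a \<Rightarrow> 's \<Rightarrow> real) \<Rightarrow> ('s \<Rightarrow> 'x \<Rightarrow> real) \<Rightarrow> ('x \<Rightarrow> 's)
    \<Rightarrow> ('x \<times> 'a \<Rightarrow> real) \<Rightarrow> 'x \<Rightarrow> 'x \<times> 'a \<Rightarrow> real" where
  "Pu T q g u x' = (\<lambda>(x, a). Tobs T q g x a x' * u (x, a) /
       infsum (\<lambda>(y, b). Tobs T q g y b x' * u (y, b)) UNIV)"

definition backward_KI :: "('s \<Rightarrow> 'a \<Rightarrow> 's \<Rightarrow> real) \<Rightarrow> ('s \<Rightarrow> 'x \<Rightarrow> real) \<Rightarrow> ('x \<Rightarrow> 's)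
    \<Rightarrow> 'x \<Rightarrow> 'x \<Rightarrow> bool" where
  "backward_KI T q g x1 x2 \<longleftrightarrow>
     (\<forall>u :: 'x \<times> 'a \<Rightarrow> real. full_support_dist u \<longrightarrow> Pu T q g u x1 = Pu T q g u x2)"

definition forward_KI :: "('s \<Rightarrow> 'a \<Rightarrow> 's \<Rightarrow> real) \<Rightarrow> ('s \<Rightarrow> 'x \<Rightarrow> real) \<Rightarrow> ('x \<Rightarrow> 's)
    \<Rightarrow> 'x \<Rightarrow> 'x \<Rightarrow> bool" where
  "forward_KI T q g x1 x2 \<longleftrightarrow> (\<forall>a. Tobs T q g x1 a = Tobs T q g x2 a)"

definition KI :: "('s \<Rightarrow> 'a \<Rightarrow> 's \<Rightarrow> real) \<Rightarrow> ('s \<Rightarrow> 'x \<Rightarrow> real) \<Rightarrow> ('x \<Rightarrow> 's)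
    \<Rightarrow> 'x \<Rightarrow> 'x \<Rightarrow> bool" where
  "KI T q g x1 x2 \<longleftrightarrow> backward_KI T q g x1 x2 \<and> forward_KI T q g x1 x2"

definition N_KD :: "nat \<Rightarrow> ('s \<Rightarrow> nat) \<Rightarrow> ('s \<Rightarrow> 'a \<Rightarrow> 's \<Rightarrow> real) \<Rightarrow> ('s \<Rightarrow> 'x \<Rightarrow> real)
    \<Rightarrow> ('x \<Rightarrow> 's) \<Rightarrow> nat" where
  "N_KD H lS T q g = Max ((\<lambda>h. card (obs_layer lS g h //
       ({(x1, x2). KI T q g x1 x2} \<inter> (obs_layer lS g h \<times> obs_layer lS g h)))) ` {1..H})"

definition phi_classes :: "(nat \<Rightarrow> ('x \<Rightarrow> nat) set) \<Rightarrow> bool" where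
  "phi_classes Phi \<longleftrightarrow> (\<forall>N. finite (Phi N) \<and> (\<forall>\<phi>\<in>Phi N. \<forall>x. \<phi> x \<in> {1..N}))"

definition Fclass :: "(nat \<Rightarrow> ('x \<Rightarrow> nat) set) \<Rightarrow> nat \<Rightarrow> ('x \<Rightarrow> 'a \<Rightarrow> 'x \<Rightarrow> real) set" where
  "Fclass Phi N = {f. \<exists>w phiF phiB.
      (\<forall>i a j. 0 \<le> w i a j \<and> w i a j \<le> 1) \<and> phiF \<in> Phi N \<and> phiB \<in> Phi N \<and>
      f = (\<lambda>x b y. (w :: nat \<Rightarrow> 'a \<Rightarrow> nat \<Rightarrow> real) (phiF x) b (phiB y))
    }"

definition realizable :: "nat \<Rightarrow> ('s::finite \<Rightarrow> nat) \<Rightarrow> ('s \<Rightarrow> 'a::finite \<Rightarrow> 's \<Rightarrow> real)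
    \<Rightarrow> ('s \<Rightarrow> 'x::countable \<Rightarrow> real) \<Rightarrow> ('x \<Rightarrow> 's) \<Rightarrow> (nat \<Rightarrow> ('x \<Rightarrow> nat) set) \<Rightarrow> bool" where
  "realizable H lS T q g Phi \<longleftrightarrow>
     (\<forall>h \<in> {1..H}. \<forall>N \<ge> N_KD H lS T q g. \<forall>\<rho> :: 's \<Rightarrow> real.
        ((\<forall>s. lS s = h \<longrightarrow> 0 < \<rho> s) \<and> (\<forall>s. lS s \<noteq> h \<longrightarrow> \<rho> s = 0) \<and>
         (\<Sum>s\<in>{s. lS s = h}. \<rho> s) = 1) \<longrightarrow>
        (\<exists>f \<in> Fclass Phi N. \<forall>x a x'. lS (g x) = h - 1 \<longrightarrow> lS (g x') = h \<longrightarrow>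
           f x a x' = T (g x) a (g x') / (T (g x) a (g x') + \<rho> (g x'))))"

end

theory Submission
  imports Defs
begin

text \<open>Realizability with the uniform distribution \<rho> on the states of layer h yields
  f(x,a,x') = w(\<phi>F x, a, \<phi>B x') = t/(t + c) with t = T(g x'|g x, a) and c > 0 constant.
  As t \<mapsto> t/(t + c) is injective on t \<ge> 0, observations x1', x2' with equal \<phi>B-values
  have the same incoming transitions from layer h - 1, and hence from every state, since
  no other layer leads into layer h.  In the backward posterior P_u(x,a|x') the emission
  factor q(x'|g x') cancels against the normalisation, so P_u(\<cdot>|x') depends on x' only
  through these incoming transitions.\<close>

lemma Pu_cancel_emission:
  assumes "q (g x') x' \<noteq> 0"
  shows "Pu T q g u x' = (\<lambda>(x, a). T (g x) a (g x') * u (x, a) /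
           infsum (\<lambda>(y, b). T (g y) b (g x') * u (y, b)) UNIV)"
proof -
  have factor: "(\<lambda>(y, b). Tobs T q g y b x' * u (y, b))
      = (\<lambda>z. q (g x') x' * (case z of (y, b) \<Rightarrow> T (g y) b (g x') * u (y, b)))"
    by (auto simp: Tobs_def)
  show ?thesis
    unfolding Pu_def factor infsum_cmult_right'
    using assms by (auto simp: Tobs_def)
qed

lemma backward_KI_if_same_incoming:
  assumes "q (g x1) x1 \<noteq> 0" and "q (g x2) x2 \<noteq> 0"
    and "\<And>y a. T (g y) a (g x1) = T (g y) a (g x2)"
  shows "backward_KI T q g x1 x2"
  unfolding backward_KI_def using assms by (simp add: Pu_cancel_emission)

lemma divide_add_const_inj:
  fixes t1 t2 c :: real
  assumes "0 \<le> t1" and "0 \<le> t2" and "0 < c" and "t1 / (t1 + c) = t2 / (t2 + c)"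
  shows "t1 = t2"
proof -
  have "t1 * (t2 + c) = t2 * (t1 + c)"
    using assms by (simp add: divide_simps)
  then have "t1 * c = t2 * c" by (simp add: algebra_simps)
  then show ?thesis using \<open>0 < c\<close> by simp
qed

lemma block_mdp_transition_zero:
  assumes mdp: "block_mdp H lS T q g" and "lS s' \<noteq> lS s + 1"
  shows "T s a s' = 0"
proof (cases "lS s < H")
  case True
  then have "0 < T s a s' \<longrightarrow> lS s' = lS s + 1" using mdp unfolding block_mdp_def by blast
  moreover have "0 \<le> T s a s'" using mdp unfolding block_mdp_def by blast
  ultimately show ?thesis using assms(2) by linarith
next
  case False
  then have "lS s = H" using mdp unfolding block_mdp_def by (meson le_neq_implies_less)
  then show ?thesis using mdp unfolding block_mdp_def by blast
qed

lemma realizable_uniform_layer: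
  fixes T :: "'s::finite \<Rightarrow> 'a::finite \<Rightarrow> 's \<Rightarrow> real" and g :: "'x::countable \<Rightarrow> 's"
  assumes "realizable H lS T q g Phi" and "h \<in> {1..H}" and "N \<ge> N_KD H lS T q g"
    and "lS s0 = h"
  obtains c f where "0 < c" and "f \<in> Fclass Phi N"
    and "\<And>x a x'. lS (g x) = h - 1 \<Longrightarrow> lS (g x') = h \<Longrightarrow>
           f x a x' = T (g x) a (g x') / (T (g x) a (g x') + c)"
proof -
  define c where "c = 1 / real (card {s. lS s = h})"
  define \<rho> where "\<rho> = (\<lambda>s. if lS s = h then c else 0)"
  have "card {s. lS s = h} > 0"
    using \<open>lS s0 = h\<close> by (auto simp: card_gt_0_iff)
  with \<open>lS s0 = h\<close> have "0 < c" and "(\<Sum>s\<in>{s. lS s = h}. \<rho> s) = 1"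
    by (auto simp: c_def \<rho>_def)
  moreover have "\<forall>s. lS s = h \<longrightarrow> 0 < \<rho> s" and "\<forall>s. lS s \<noteq> h \<longrightarrow> \<rho> s = 0"
    using \<open>0 < c\<close> by (simp_all add: \<rho>_def)
  ultimately obtain f where "f \<in> Fclass Phi N"
    and "\<forall>x a x'. lS (g x) = h - 1 \<longrightarrow> lS (g x') = h \<longrightarrow>
           f x a x' = T (g x) a (g x') / (T (g x) a (g x') + \<rho> (g x'))"
    using assms(1-3) unfolding realizable_def by blast
  then show ?thesis using that[OF \<open>0 < c\<close>] by (simp add: \<rho>_def)
qed

lemma backward_decoder_on_nonempty_layer:
  fixes T :: "'s::finite \<Rightarrow> 'a::finite \<Rightarrow> 's \<Rightarrow> real" and g :: "'x::countable \<Rightarrow> 's"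
  assumes mdp: "block_mdp H lS T q g" and "realizable H lS T q g Phi"
    and "h \<in> {1..H}" and "N \<ge> N_KD H lS T q g" and "lS s0 = h"
  shows "\<exists>phiB \<in> Phi N. \<forall>x1 x2. x1 \<in> obs_layer lS g h \<longrightarrow> x2 \<in> obs_layer lS g h \<longrightarrow>
           phiB x1 = phiB x2 \<longrightarrow> backward_KI T q g x1 x2"
proof -
  obtain c f where "0 < c" and "f \<in> Fclass Phi N"
    and f_real: "\<And>x a x'. lS (g x) = h - 1 \<Longrightarrow> lS (g x') = h \<Longrightarrow>
              f x a x' = T (g x) a (g x') / (T (g x) a (g x') + c)"
    using realizable_uniform_layer assms(2-5) by blast
  from \<open>f \<in> Fclass Phi N\<close> obtain w :: "nat \<Rightarrow> 'a \<Rightarrow> nat \<Rightarrow> real" and phiF phiB :: "'x \<Rightarrow> nat"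
    where "phiB \<in> Phi N" and f_def: "f = (\<lambda>x a x'. w (phiF x) a (phiB x'))"
    unfolding Fclass_def by blast
  have "backward_KI T q g x1 x2"
    if "x1 \<in> obs_layer lS g h" and "x2 \<in> obs_layer lS g h" and "phiB x1 = phiB x2" for x1 x2
  proof (rule backward_KI_if_same_incoming)
    have layers: "lS (g x1) = h" "lS (g x2) = h" using that by (simp_all add: obs_layer_def)
    show "q (g x1) x1 \<noteq> 0" and "q (g x2) x2 \<noteq> 0"
      using mdp unfolding block_mdp_def by (metis less_irrefl)+
    show "T (g y) a (g x1) = T (g y) a (g x2)" for y a
    proof (cases "lS (g y) = h - 1")
      case True
      have "f y a x1 = f y a x2" using \<open>phiB x1 = phiB x2\<close> by (simp add: f_def)
      then have "T (g y) a (g x1) / (T (g y) a (g x1) + c) = T (g y) a (g x2) / (T (g y) a (g x2) + c)"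
        using f_real True layers by simp
      moreover have "0 \<le> T (g y) a (g x1)" and "0 \<le> T (g y) a (g x2)"
        using mdp unfolding block_mdp_def by blast+
      ultimately show ?thesis using divide_add_const_inj \<open>0 < c\<close> by blast
    next
      case False
      with \<open>h \<in> {1..H}\<close> have "lS (g x) \<noteq> lS (g y) + 1" if "lS (g x) = h" for x
        using that by auto
      then show ?thesis using block_mdp_transition_zero[OF mdp] layers by metis
    qed
  qed
  then show ?thesis using \<open>phiB \<in> Phi N\<close> by blast
qed

theorem mainTheorem8:
  fixes H :: nat and lS :: "'s::finite \<Rightarrow> nat" and T :: "'s \<Rightarrow> 'a::finite \<Rightarrow> 's \<Rightarrow> real"
    and q :: "'s \<Rightarrow> 'x::countable \<Rightarrow> real" and g :: "'x \<Rightarrow> 's"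
    and Phi :: "nat \<Rightarrow> ('x \<Rightarrow> nat) set" and h N :: nat
  assumes "block_mdp H lS T q g"
    and "phi_classes Phi"
    and "realizable H lS T q g Phi"
    and "h \<in> {1..H}"
    and "N \<ge> N_KD H lS T q g"
  shows "\<exists>phiB \<in> Phi N. \<forall>x1 x2. x1 \<in> obs_layer lS g h \<longrightarrow> x2 \<in> obs_layer lS g h \<longrightarrow>
           phiB x1 = phiB x2 \<longrightarrow> backward_KI T q g x1 x2"
proof (cases "\<exists>s. lS s = h")
  case True
  then show ?thesis using backward_decoder_on_nonempty_layer assms(1,3-5) by blast
next
  case False
  \<comment> \<open>Layer h is empty, so the claim is vacuous; realizability at the nonempty layer of an
    arbitrary state still provides some element of Phi N.\<close>
  then have "obs_layer lS g h = {}" by (simp add: obs_layer_def)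
  have "lS (undefined :: 's) \<in> {1..H}" using assms(1) unfolding block_mdp_def by simp
  then obtain phiB where "phiB \<in> Phi N"
    using backward_decoder_on_nonempty_layer[OF assms(1,3) _ assms(5) refl] by blast
  with \<open>obs_layer lS g h = {}\<close> show ?thesis by blast
qed

end
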